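(* Let $n\ge0$ and let $A,B$ be induced subgraphs of a graph $G$ such that $A\cup B=G$ and such that for any two vertices $v,w$ of $G$ with $v\notin A$ and $w\notin B$, the distance from $v$ to $w$ is at least $n+1$. Then the square of inclusions \[\begin{array}{ccc} A\cap B&\hookrightarrow&A\\ \downarrow&&\downarrow\\ B&\hookrightarrow&G\end{array}\] is an $n$-skeletal pushout.
   Context: A graph is a set with a reflexive symmetric relation (edges); graph maps preserve the relation. An induced subgraph is a subset of vertices with all edges of $G$ between them. The distance between vertices is the length of a shortest path ($\infty$ if none). The box product $G\square H$ has vertex set $V(G)\times V(H)$ and $(v,w)\sim(v',w')$ iff ($v=v'$, $w\sim w'$) or ($v\sim v'$, $w=w'$); $I_1$ is a single edge. The $1$-nerve $N_1G$ is the cubical set (presheaf on the box category with faces, degeneracies and connections) whose $k$-cubes are graph maps $I_1^{\square k}\to G$. $\operatorname{sk}^n$ of a cubical set is the subobject generated by cubes of dimension $\le n$. A commutative square of graphs is an $n$-skeletal pushout if applying $\operatorname{sk}^n\circ N_1$ yields a pushout square of cubical sets. *)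

theory Defs
  imports Main "HOL-Library.Extended_Nat"
begin

definition graph :: "'v set \<Rightarrow> ('v \<Rightarrow> 'v \<Rightarrow> bool) \<Rightarrow> bool" where
  "graph V E \<longleftrightarrow> (\<forall>v w. E v w \<longrightarrow> v \<in> V \<and> w \<in> V) \<and> (\<forall>v\<in>V. E v v)
     \<and> (\<forall>v w. E v w \<longrightarrow> E w v)"

definition induced :: "('v \<Rightarrow> 'v \<Rightarrow> bool) \<Rightarrow> 'v set \<Rightarrow> 'v \<Rightarrow> 'v \<Rightarrow> bool" where
  "induced E A = (\<lambda>v w. v \<in> A \<and> w \<in> A \<and> E v w)"

definition is_path :: "'v set \<Rightarrow> ('v \<Rightarrow> 'v \<Rightarrow> bool) \<Rightarrow> 'v list \<Rightarrow> bool" where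
  "is_path V E p \<longleftrightarrow> p \<noteq> [] \<and> set p \<subseteq> V \<and> (\<forall>i. Suc i < length p \<longrightarrow> E (p!i) (p!Suc i))"

text \<open>Distance = length (number of edges) of a shortest path; infinity if none.\<close>
definition gdist :: "'v set \<Rightarrow> ('v \<Rightarrow> 'v \<Rightarrow> bool) \<Rightarrow> 'v \<Rightarrow> 'v \<Rightarrow> enat" where
  "gdist V E v w = (INF p \<in> {p. is_path V E p \<and> hd p = v \<and> last p = w}. enat (length p - 1))"

section \<open>Cubes I_1^{box k}: vertices are bool lists of length k\<close>

text \<open>Adjacency in the k-fold box product of I_1: differ in at most one coordinate.\<close>
definition cube_adj :: "bool list \<Rightarrow> bool list \<Rightarrow> bool" where
  "cube_adj xs ys \<longleftrightarrow> length xs = length ys \<and> card {i. i < length xs \<and> xs!i \<noteq> ys!i} \<le> 1"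

definition restr :: "nat \<Rightarrow> (bool list \<Rightarrow> 'a) \<Rightarrow> bool list \<Rightarrow> 'a" where
  "restr k f = (\<lambda>xs. if length xs = k then f xs else undefined)"

text \<open>Graph maps I_1^{box k} -> (V,E), normalised to undefined off the vertex set.\<close>
definition graph_map_cube :: "nat \<Rightarrow> 'v set \<Rightarrow> ('v \<Rightarrow> 'v \<Rightarrow> bool) \<Rightarrow> (bool list \<Rightarrow> 'v) \<Rightarrow> bool" where
  "graph_map_cube k V E f \<longleftrightarrow>
     (\<forall>xs. length xs = k \<longrightarrow> f xs \<in> V) \<and>
     (\<forall>xs ys. length xs = k \<longrightarrow> length ys = k \<longrightarrow> cube_adj xs ys \<longrightarrow> E (f xs) (f ys)) \<and>
     (\<forall>xs. length xs \<noteq> k \<longrightarrow> f xs = undefined)"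

text \<open>A morphism (j,k,phi) is a map box^j -> box^k, given by its (normalised) vertex map.\<close>
type_synonym boxmor = "nat \<times> nat \<times> (bool list \<Rightarrow> bool list)"

definition face :: "nat \<Rightarrow> bool \<Rightarrow> bool list \<Rightarrow> bool list" where
  "face i e = (\<lambda>xs. take i xs @ e # drop i xs)"

definition degen :: "nat \<Rightarrow> bool list \<Rightarrow> bool list" where
  "degen i = (\<lambda>xs. take i xs @ drop (Suc i) xs)"

definition conn :: "nat \<Rightarrow> bool \<Rightarrow> bool list \<Rightarrow> bool list" where
  "conn i e = (\<lambda>xs. take i xs @ (if e then xs!i \<or> xs!Suc i else xs!i \<and> xs!Suc i) # drop (i+2) xs)"

inductive_set box_mor :: "boxmor set" where
  bm_id: "(k, k, restr k id) \<in> box_mor"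
| bm_face: "i \<le> k \<Longrightarrow> (k, Suc k, restr k (face i e)) \<in> box_mor"
| bm_degen: "i \<le> k \<Longrightarrow> (Suc k, k, restr (Suc k) (degen i)) \<in> box_mor"
| bm_conn: "i < k \<Longrightarrow> (Suc k, k, restr (Suc k) (conn i e)) \<in> box_mor"
| bm_comp: "(j, k, \<phi>) \<in> box_mor \<Longrightarrow> (k, m, \<psi>) \<in> box_mor \<Longrightarrow> (j, m, restr j (\<psi> \<circ> \<phi>)) \<in> box_mor"

text \<open>cells X k is the set of k-cubes; act X (j,k,phi) : X_k -> X_j.\<close>
record 'x cset =
  cells :: "nat \<Rightarrow> 'x set"
  act :: "boxmor \<Rightarrow> 'x \<Rightarrow> 'x"

definition is_cset :: "'x cset \<Rightarrow> bool" where
  "is_cset X \<longleftrightarrow>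
    (\<forall>j k \<phi> x. (j, k, \<phi>) \<in> box_mor \<longrightarrow> x \<in> cells X k \<longrightarrow> act X (j, k, \<phi>) x \<in> cells X j) \<and>
    (\<forall>k x. x \<in> cells X k \<longrightarrow> act X (k, k, restr k id) x = x) \<and>
    (\<forall>j k m \<phi> \<psi> x. (j, k, \<phi>) \<in> box_mor \<longrightarrow> (k, m, \<psi>) \<in> box_mor \<longrightarrow> x \<in> cells X m \<longrightarrow>
        act X (j, m, restr j (\<psi> \<circ> \<phi>)) x = act X (j, k, \<phi>) (act X (k, m, \<psi>) x))"

definition cset_map :: "'x cset \<Rightarrow> 'y cset \<Rightarrow> (nat \<Rightarrow> 'x \<Rightarrow> 'y) \<Rightarrow> bool" where
  "cset_map X Y f \<longleftrightarrow>
    (\<forall>k x. x \<in> cells X k \<longrightarrow> f k x \<in> cells Y k) \<and>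
    (\<forall>j k \<phi> x. (j, k, \<phi>) \<in> box_mor \<longrightarrow> x \<in> cells X k \<longrightarrow>
        f j (act X (j, k, \<phi>) x) = act Y (j, k, \<phi>) (f k x))"

text \<open>Pushout square P -i1-> A, P -i2-> B, A -j1-> Q, B -j2-> Q in cubical sets,
  universal property tested against all cubical sets with cells in type 'y
  (the type 'y is arbitrary, i.e. universally quantified at theorem level).\<close>
definition cset_pushout :: "'y itself \<Rightarrow> 'p cset \<Rightarrow> 'a cset \<Rightarrow> 'b cset \<Rightarrow> 'q cset \<Rightarrow>
    (nat \<Rightarrow> 'p \<Rightarrow> 'a) \<Rightarrow> (nat \<Rightarrow> 'p \<Rightarrow> 'b) \<Rightarrow> (nat \<Rightarrow> 'a \<Rightarrow> 'q) \<Rightarrow> (nat \<Rightarrow> 'b \<Rightarrow> 'q) \<Rightarrow> bool" where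
  "cset_pushout _ P A B Q i1 i2 j1 j2 \<longleftrightarrow>
    is_cset P \<and> is_cset A \<and> is_cset B \<and> is_cset Q \<and>
    cset_map P A i1 \<and> cset_map P B i2 \<and> cset_map A Q j1 \<and> cset_map B Q j2 \<and>
    (\<forall>k x. x \<in> cells P k \<longrightarrow> j1 k (i1 k x) = j2 k (i2 k x)) \<and>
    (\<forall>(Y :: 'y cset) g1 g2. is_cset Y \<longrightarrow> cset_map A Y g1 \<longrightarrow> cset_map B Y g2 \<longrightarrow>
       (\<forall>k x. x \<in> cells P k \<longrightarrow> g1 k (i1 k x) = g2 k (i2 k x)) \<longrightarrow>
       (\<exists>h. cset_map Q Y h \<and> (\<forall>k x. x \<in> cells A k \<longrightarrow> h k (j1 k x) = g1 k x)
              \<and> (\<forall>k x. x \<in> cells B k \<longrightarrow> h k (j2 k x) = g2 k x)) \<and>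
       (\<forall>h h'. cset_map Q Y h \<longrightarrow> (\<forall>k x. x \<in> cells A k \<longrightarrow> h k (j1 k x) = g1 k x)
              \<longrightarrow> (\<forall>k x. x \<in> cells B k \<longrightarrow> h k (j2 k x) = g2 k x)
              \<longrightarrow> cset_map Q Y h' \<longrightarrow> (\<forall>k x. x \<in> cells A k \<longrightarrow> h' k (j1 k x) = g1 k x)
              \<longrightarrow> (\<forall>k x. x \<in> cells B k \<longrightarrow> h' k (j2 k x) = g2 k x)
              \<longrightarrow> (\<forall>k x. x \<in> cells Q k \<longrightarrow> h k x = h' k x)))"

definition N1 :: "'v set \<Rightarrow> ('v \<Rightarrow> 'v \<Rightarrow> bool) \<Rightarrow> (bool list \<Rightarrow> 'v) cset" where
  "N1 V E = \<lparr>cells = (\<lambda>k. {f. graph_map_cube k V E f}),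
             act = (\<lambda>(j, k, \<phi>) x. restr j (x \<circ> \<phi>))\<rparr>"

definition sk :: "nat \<Rightarrow> 'x cset \<Rightarrow> 'x cset" where
  "sk n X = \<lparr>cells = (\<lambda>j. {act X (j, m, \<phi>) x | m \<phi> x. m \<le> n \<and> (j, m, \<phi>) \<in> box_mor \<and> x \<in> cells X m}),
             act = act X\<rparr>"

text \<open>Induced map of an inclusion of graphs on sk^n N_1 (cubes are unchanged).\<close>
definition incl_map :: "nat \<Rightarrow> 'x \<Rightarrow> 'x" where
  "incl_map = (\<lambda>k x. x)"

definition skeletal_pushout_incl :: "'y itself \<Rightarrow> nat \<Rightarrow> ('v \<Rightarrow> 'v \<Rightarrow> bool) \<Rightarrow>
    'v set \<Rightarrow> 'v set \<Rightarrow> 'v set \<Rightarrow> 'v set \<Rightarrow> bool" where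
  "skeletal_pushout_incl T n E P A B Q \<longleftrightarrow>
     cset_pushout T (sk n (N1 P (induced E P))) (sk n (N1 A (induced E A)))
       (sk n (N1 B (induced E B))) (sk n (N1 Q (induced E Q)))
       incl_map incl_map incl_map incl_map"

end

(*
  Every k-cube of sk^n N_1 G has the form x \<circ> \<phi> with x an m-cube of G, m \<le> n, and \<phi> a map
  of the box category.

  Union: any two vertices of I_1^{\<box>m} are joined by a path of length m, so the vertices of x
  cannot contain both a vertex outside A and one outside B, as these are at distance \<ge> n + 1.
  Hence x is a cube of A or of B.

  Intersection: the image of \<phi> is a face of I_1^{\<box>m}, and I_1^{\<box>m} retracts onto this face by
  a composite r of degeneracies and faces. If x \<circ> \<phi> has all its vertices in B, then x \<circ> r is
  an m-cube of A \<inter> B through which x \<circ> \<phi> still factors.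

  All four cubical sets are subobjects of sk^n N_1 G with the same action (precomposition), and
  a union of two subobjects is the pushout over their intersection.
*)

theory Submission
  imports Defs
begin

lemma box_mor_length:
  "(j, k, \<phi>) \<in> box_mor \<Longrightarrow> length xs = j \<Longrightarrow> length (\<phi> xs) = k"
  by (induction arbitrary: xs rule: box_mor.induct)
     (auto simp: restr_def face_def degen_def conn_def)

lemma cube_adj_iff:
  "cube_adj xs ys \<longleftrightarrow>
    length xs = length ys \<and> (\<exists>i. \<forall>p<length xs. p \<noteq> i \<longrightarrow> xs!p = ys!p)"
proof -
  have "card {p. p < length xs \<and> xs!p \<noteq> ys!p} \<le> Suc 0 \<longleftrightarrow>
      (\<forall>p\<in>{p. p < length xs \<and> xs!p \<noteq> ys!p}.
        \<forall>q\<in>{p. p < length xs \<and> xs!p \<noteq> ys!p}. p = q)"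
    by (rule card_le_Suc0_iff_eq) simp
  also have "\<dots> \<longleftrightarrow> (\<exists>i. \<forall>p<length xs. p \<noteq> i \<longrightarrow> xs!p = ys!p)"
    by blast
  finally show ?thesis
    unfolding cube_adj_def One_nat_def by blast
qed

lemma face_nth:
  "i \<le> length xs \<Longrightarrow>
    face i e xs ! p = (if p < i then xs!p else if p = i then e else xs!(p - 1))"
  by (auto simp: face_def nth_append min_def)

lemma degen_nth: "i < length xs \<Longrightarrow> degen i xs ! p = (if p < i then xs!p else xs!Suc p)"
  by (auto simp: degen_def nth_append min_def)

lemma conn_nth:
  assumes "Suc i < length xs"
  shows "conn i e xs ! p = (if p < i then xs!p
    else if p = i then (if e then xs!i \<or> xs!Suc i else xs!i \<and> xs!Suc i) else xs!Suc p)"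
  using assms unfolding conn_def by (cases "p < i"; cases "p = i") (auto simp: nth_append min_def)

lemma box_mor_cube_adj:
  "(j, k, \<phi>) \<in> box_mor \<Longrightarrow> length xs = j \<Longrightarrow> length ys = j \<Longrightarrow> cube_adj xs ys
    \<Longrightarrow> cube_adj (\<phi> xs) (\<phi> ys)"
proof (induction arbitrary: xs ys rule: box_mor.induct)
  case (bm_id k)
  then show ?case by (simp add: restr_def)
next
  case (bm_face i k e)
  then obtain q where "\<forall>p<k. p \<noteq> q \<longrightarrow> xs!p = ys!p" by (auto simp: cube_adj_iff)
  then have "\<forall>p<Suc k. p \<noteq> (if q < i then q else Suc q)
      \<longrightarrow> face i e xs ! p = face i e ys ! p"
    using bm_face by (auto simp: face_nth)
  then show ?case using bm_face by (auto simp: cube_adj_iff restr_def face_def)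
next
  case (bm_degen i k)
  then obtain q where "\<forall>p<Suc k. p \<noteq> q \<longrightarrow> xs!p = ys!p" by (auto simp: cube_adj_iff)
  then have "\<forall>p<k. p \<noteq> (if q < i then q else q - 1) \<longrightarrow> degen i xs ! p = degen i ys ! p"
    using bm_degen by (auto simp: degen_nth)
  then show ?case using bm_degen by (auto simp: cube_adj_iff restr_def degen_def)
next
  case (bm_conn i k e)
  then obtain q where "\<forall>p<Suc k. p \<noteq> q \<longrightarrow> xs!p = ys!p" by (auto simp: cube_adj_iff)
  then have "\<forall>p<k. p \<noteq> (if q < i then q else if q \<le> Suc i then i else q - 1)
      \<longrightarrow> conn i e xs ! p = conn i e ys ! p"
    using bm_conn by (auto simp: conn_nth)
  moreover have "length (conn i e xs) = k" "length (conn i e ys) = k"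
    using bm_conn by (auto simp: conn_def)
  ultimately show ?case using bm_conn.prems by (simp add: cube_adj_iff restr_def) blast
next
  case (bm_comp j k \<phi> m \<psi>)
  then show ?case by (auto simp: restr_def box_mor_length)
qed

lemma set_coord_box_mor: "l < m \<Longrightarrow> (m, m, restr m (\<lambda>xs. xs[l := e])) \<in> box_mor"
proof -
  assume "l < m"
  then obtain k where m: "m = Suc k" and "l \<le> k" by (cases m) auto
  then have "(m, m, restr m (restr k (face l e) \<circ> restr m (degen l))) \<in> box_mor"
    by (auto intro: bm_comp bm_degen bm_face)
  moreover have "restr m (restr k (face l e) \<circ> restr m (degen l)) = restr m (\<lambda>xs. xs[l := e])"
    using \<open>l \<le> k\<close>
    by (auto simp: m restr_def face_def degen_def upd_conv_take_nth_drop min_def)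
  ultimately show ?thesis by simp
qed

(* For nonempty factors these products are exactly the faces of the cube. *)
definition subcube :: "bool set list \<Rightarrow> bool list set" where
  "subcube Ds = {xs. list_all2 (\<in>) xs Ds}"

lemma subcube_length: "xs \<in> subcube Ds \<Longrightarrow> length xs = length Ds"
  by (simp add: subcube_def list_all2_lengthD)

lemma subcube_replicate_UNIV: "subcube (replicate k UNIV) = {xs. length xs = k}"
  by (auto simp: subcube_def list_all2_conv_all_nth)

lemma subcube_Nil [simp]: "subcube [] = {[]}"
  by (simp add: subcube_def)

lemma mem_subcube_Cons [simp]:
  "xs \<in> subcube (D # Ds) \<longleftrightarrow> (\<exists>x xs'. xs = x # xs' \<and> x \<in> D \<and> xs' \<in> subcube Ds)"
  by (auto simp: subcube_def list_all2_Cons2)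

lemma mem_subcube_append:
  "xs \<in> subcube (Ds @ Es) \<longleftrightarrow> (\<exists>us vs. xs = us @ vs \<and> us \<in> subcube Ds \<and> vs \<in> subcube Es)"
  by (auto simp: subcube_def list_all2_append2 dest: list_all2_lengthD)

lemma append_in_subcube:
  "us \<in> subcube Ds \<Longrightarrow> vs \<in> subcube Es \<Longrightarrow> us @ vs \<in> subcube (Ds @ Es)"
  by (auto simp: mem_subcube_append)

lemma subcube_nonempty_iff: "subcube Ds \<noteq> {} \<longleftrightarrow> (\<forall>D\<in>set Ds. D \<noteq> {})"
  by (induction Ds) (auto simp flip: ex_in_conv)

lemma image_restr_subcube: "length Ds = j \<Longrightarrow> restr j f ` subcube Ds = f ` subcube Ds"
  by (rule image_cong) (auto simp: restr_def subcube_length)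

(* Each generator of the box category changes only a block of consecutive coordinates. *)
lemma image_subcube_splice:
  assumes "g ` subcube Fs = subcube Gs"
    and "\<And>us vs ws. us \<in> subcube Ds \<Longrightarrow> vs \<in> subcube Fs \<Longrightarrow> ws \<in> subcube Hs
      \<Longrightarrow> f (us @ vs @ ws) = us @ g vs @ ws"
  shows "f ` subcube (Ds @ Fs @ Hs) = subcube (Ds @ Gs @ Hs)"
proof (intro equalityI subsetI)
  fix xs assume "xs \<in> f ` subcube (Ds @ Fs @ Hs)"
  then obtain us vs ws where "xs = us @ g vs @ ws"
    and "us \<in> subcube Ds" "vs \<in> subcube Fs" "ws \<in> subcube Hs"
    using assms(2) by (auto simp: mem_subcube_append)
  moreover have "g vs \<in> subcube Gs"
    using assms(1) \<open>vs \<in> subcube Fs\<close> by blast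
  ultimately show "xs \<in> subcube (Ds @ Gs @ Hs)"
    by (simp add: append_in_subcube)
next
  fix xs assume "xs \<in> subcube (Ds @ Gs @ Hs)"
  then obtain us vs ws where "xs = us @ g vs @ ws"
    and "us \<in> subcube Ds" "vs \<in> subcube Fs" "ws \<in> subcube Hs"
    unfolding mem_subcube_append by (auto simp flip: assms(1))
  then show "xs \<in> f ` subcube (Ds @ Fs @ Hs)"
    using assms(2) by (metis image_eqI append_in_subcube)
qed

lemma image_subcube_pair:
  "(\<lambda>vs. [f (vs!0) (vs!1)]) ` subcube [D1, D2] =
    subcube [{f a b | a b. a \<in> D1 \<and> b \<in> D2}]"
  (is "?g ` _ = _")
proof (intro equalityI subsetI)
  fix vs assume "vs \<in> ?g ` subcube [D1, D2]"
  then obtain a b where "vs = [f a b]" "a \<in> D1" "b \<in> D2"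
    by auto
  then show "vs \<in> subcube [{f a b | a b. a \<in> D1 \<and> b \<in> D2}]"
    by auto
next
  fix vs assume "vs \<in> subcube [{f a b | a b. a \<in> D1 \<and> b \<in> D2}]"
  then obtain a b where "vs = [f a b]" "a \<in> D1" "b \<in> D2"
    by auto
  then show "vs \<in> ?g ` subcube [D1, D2]"
    by (auto intro: image_eqI[of _ _ "[a, b]"])
qed

lemma image_face_subcube:
  assumes "i \<le> length Ds"
  shows "restr (length Ds) (face i e) ` subcube Ds = subcube (take i Ds @ [{e}] @ drop i Ds)"
proof -
  have "restr (length Ds) (face i e) ` subcube (take i Ds @ [] @ drop i Ds)
      = subcube (take i Ds @ [{e}] @ drop i Ds)"
  proof (rule image_subcube_splice[where g = "\<lambda>_. [e]"])
    fix us vs ws assume "us \<in> subcube (take i Ds)" "vs \<in> subcube []" "ws \<in> subcube (drop i Ds)"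
    then show "restr (length Ds) (face i e) (us @ vs @ ws) = us @ [e] @ ws"
      using assms by (auto simp: restr_def face_def dest!: subcube_length)
  qed auto
  then show ?thesis
    by simp
qed

lemma image_degen_subcube:
  assumes "i < length Ds" and "Ds!i \<noteq> {}"
  shows "restr (length Ds) (degen i) ` subcube Ds = subcube (take i Ds @ drop (Suc i) Ds)"
proof -
  have "Ds = take i Ds @ [Ds!i] @ drop (Suc i) Ds"
    using assms(1) by (simp add: id_take_nth_drop)
  moreover have "restr (length Ds) (degen i) ` subcube (take i Ds @ [Ds!i] @ drop (Suc i) Ds)
      = subcube (take i Ds @ [] @ drop (Suc i) Ds)"
  proof (rule image_subcube_splice[where g = "\<lambda>_. []"])
    fix us vs ws
    assume "us \<in> subcube (take i Ds)" "vs \<in> subcube [Ds!i]" "ws \<in> subcube (drop (Suc i) Ds)"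
    then show "restr (length Ds) (degen i) (us @ vs @ ws) = us @ [] @ ws"
      using assms(1) by (auto simp: restr_def degen_def dest!: subcube_length)
  qed (use assms(2) in \<open>fastforce simp: image_iff\<close>)
  ultimately show ?thesis
    by simp
qed

lemma image_conn_subcube:
  assumes "Suc i < length Ds"
  shows "restr (length Ds) (conn i e) ` subcube Ds =
    subcube (take i Ds @ [{if e then a \<or> b else a \<and> b | a b. a \<in> Ds!i \<and> b \<in> Ds!Suc i}]
      @ drop (Suc (Suc i)) Ds)"
proof -
  have "Ds = take i Ds @ [Ds!i, Ds!Suc i] @ drop (Suc (Suc i)) Ds"
    using assms by (simp add: Cons_nth_drop_Suc)
  moreover have
    "restr (length Ds) (conn i e) ` subcube (take i Ds @ [Ds!i, Ds!Suc i] @ drop (Suc (Suc i)) Ds)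
      = subcube (take i Ds @ [{if e then a \<or> b else a \<and> b | a b. a \<in> Ds!i \<and> b \<in> Ds!Suc i}]
          @ drop (Suc (Suc i)) Ds)"
  proof (rule image_subcube_splice[OF image_subcube_pair])
    fix us vs ws
    assume "us \<in> subcube (take i Ds)" "vs \<in> subcube [Ds!i, Ds!Suc i]"
      "ws \<in> subcube (drop (Suc (Suc i)) Ds)"
    then show "restr (length Ds) (conn i e) (us @ vs @ ws)
        = us @ [if e then vs!0 \<or> vs!1 else vs!0 \<and> vs!1] @ ws"
      using assms by (auto simp: restr_def conn_def nth_append dest!: subcube_length)
  qed
  ultimately show ?thesis
    by simp
qed

lemma box_mor_image_subcube:
  "(j, k, \<phi>) \<in> box_mor \<Longrightarrow> length Ds = j \<Longrightarrow> subcube Ds \<noteq> {}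
    \<Longrightarrow> \<exists>Es. length Es = k \<and> \<phi> ` subcube Ds = subcube Es"
proof (induction arbitrary: Ds rule: box_mor.induct)
  case (bm_id k)
  then show ?case by (auto simp: image_restr_subcube)
next
  case (bm_face i k e)
  then show ?case
    using image_face_subcube[of i Ds e] by (intro exI[of _ "take i Ds @ [{e}] @ drop i Ds"]) auto
next
  case (bm_degen i k)
  then have "Ds!i \<noteq> {}"
    by (simp add: subcube_nonempty_iff)
  then show ?case
    using bm_degen image_degen_subcube[of i Ds]
    by (intro exI[of _ "take i Ds @ drop (Suc i) Ds"]) auto
next
  case (bm_conn i k e)
  then show ?case
    using image_conn_subcube[of i Ds e] by (intro exI) auto
next
  case (bm_comp j k \<phi> m \<psi>)
  obtain Es where Es: "length Es = k" "\<phi> ` subcube Ds = subcube Es"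
    using bm_comp.IH(1) bm_comp.prems by blast
  moreover have "subcube Es \<noteq> {}"
    using bm_comp.prems Es by blast
  ultimately obtain Fs where "length Fs = m" and Fs: "\<psi> ` subcube Es = subcube Fs"
    using bm_comp.IH(2) by blast
  moreover have "restr j (\<psi> \<circ> \<phi>) ` subcube Ds = subcube Fs"
    using bm_comp.prems Es Fs by (metis image_restr_subcube image_comp)
  ultimately show ?case by blast
qed

definition subcube_retract :: "bool set list \<Rightarrow> bool list \<Rightarrow> bool list" where
  "subcube_retract Ds xs =
    map (\<lambda>p. if p < length Ds \<and> is_singleton (Ds!p) then the_elem (Ds!p) else xs!p) [0..<length xs]"

lemma length_subcube_retract [simp]: "length (subcube_retract Ds xs) = length xs"
  by (simp add: subcube_retract_def)

lemma subcube_retract_Nil: "subcube_retract [] xs = xs"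
  by (simp add: subcube_retract_def map_nth)

lemma subcube_retract_snoc:
  "subcube_retract (Ds @ [D]) xs =
    (if is_singleton D then (subcube_retract Ds xs)[length Ds := the_elem D]
     else subcube_retract Ds xs)"
  by (rule nth_equalityI) (auto simp: subcube_retract_def nth_list_update nth_append)

lemma box_mor_subcube_retract:
  "length Ds \<le> m \<Longrightarrow>
    \<exists>r. (m, m, r) \<in> box_mor \<and> (\<forall>xs. length xs = m \<longrightarrow> r xs = subcube_retract Ds xs)"
proof (induction Ds rule: rev_induct)
  case Nil
  show ?case
    using bm_id[of m] by (intro exI[of _ "restr m id"]) (simp add: restr_def subcube_retract_Nil)
next
  case (snoc D Ds)
  then obtain r where r: "(m, m, r) \<in> box_mor"
    and r_eq: "\<forall>xs. length xs = m \<longrightarrow> r xs = subcube_retract Ds xs"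
    by auto
  show ?case
  proof (cases "is_singleton D")
    case True
    let ?s = "restr m (\<lambda>xs. xs[length Ds := the_elem D])"
    have "(m, m, restr m (?s \<circ> r)) \<in> box_mor"
      using bm_comp[OF r set_coord_box_mor] snoc.prems by simp
    moreover have "restr m (?s \<circ> r) xs = subcube_retract (Ds @ [D]) xs" if "length xs = m" for xs
      using that r_eq True by (simp add: restr_def subcube_retract_snoc)
    ultimately show ?thesis by blast
  next
    case False
    then show ?thesis
      using r r_eq by (auto simp: subcube_retract_snoc)
  qed
qed

lemma bool_set_not_singleton:
  assumes "(D :: bool set) \<noteq> {}" and "\<not> is_singleton D"
  shows "D = UNIV"
proof -
  have "\<exists>a\<in>D. \<exists>b\<in>D. a \<noteq> b"
    using assms is_singletonI'[of D] by meson
  then obtain a b where "a \<in> D" "b \<in> D" "a \<noteq> b"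
    by blast
  then have "x \<in> D" for x
    by (cases x; cases a; cases b) simp_all
  then show ?thesis
    by auto
qed

lemma subcube_retract_in_subcube:
  assumes "length xs = length Ds" and "\<forall>D\<in>set Ds. D \<noteq> {}"
  shows "subcube_retract Ds xs \<in> subcube Ds"
proof -
  have "subcube_retract Ds xs ! p \<in> Ds ! p" if "p < length Ds" for p
  proof (cases "is_singleton (Ds!p)")
    case True
    then show ?thesis
      using that assms(1) by (simp add: subcube_retract_def) (metis insertI1 is_singleton_the_elem)
  next
    case False
    then show ?thesis
      using that assms bool_set_not_singleton[of "Ds!p"] by (simp add: subcube_retract_def)
  qed
  then show ?thesis
    using assms(1) by (simp add: subcube_def list_all2_conv_all_nth)
qed

lemma subcube_retract_id: "xs \<in> subcube Ds \<Longrightarrow> subcube_retract Ds xs = xs"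
  by (rule nth_equalityI)
    (auto simp: subcube_retract_def subcube_def list_all2_conv_all_nth is_singleton_def)

lemma box_mor_image_retract:
  assumes "(k, m, \<phi>) \<in> box_mor"
  obtains r where "(m, m, r) \<in> box_mor"
    and "\<And>ws. length ws = m \<Longrightarrow> r ws \<in> \<phi> ` {zs. length zs = k}"
    and "\<And>zs. length zs = k \<Longrightarrow> r (\<phi> zs) = \<phi> zs"
proof -
  have "\<exists>Es. length Es = m \<and> \<phi> ` subcube (replicate k UNIV) = subcube Es"
    by (rule box_mor_image_subcube[OF assms]) (simp_all add: subcube_nonempty_iff)
  then obtain Es where "length Es = m" and Es: "\<phi> ` {zs. length zs = k} = subcube Es"
    unfolding subcube_replicate_UNIV by blast
  have "\<phi> (replicate k True) \<in> subcube Es"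
    using Es[symmetric] by simp
  then have nonempty: "\<forall>D\<in>set Es. D \<noteq> {}"
    by (auto simp flip: subcube_nonempty_iff)
  obtain r where r: "(m, m, r) \<in> box_mor"
    and r_eq: "\<And>ws. length ws = m \<Longrightarrow> r ws = subcube_retract Es ws"
    using box_mor_subcube_retract \<open>length Es = m\<close> by blast
  show thesis
  proof (rule that[OF r])
    fix ws :: "bool list" assume "length ws = m"
    then have "r ws \<in> subcube Es"
      using r_eq subcube_retract_in_subcube nonempty \<open>length Es = m\<close> by simp
    then show "r ws \<in> \<phi> ` {zs. length zs = k}"
      using Es by simp
  next
    fix zs :: "bool list" assume "length zs = k"
    then have "\<phi> zs \<in> subcube Es"
      using Es by blast
    then show "r (\<phi> zs) = \<phi> zs"
      using r_eq subcube_retract_id subcube_length \<open>length Es = m\<close> by metis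
  qed
qed

lemma graph_map_cube_comp:
  assumes "(j, m, \<phi>) \<in> box_mor" and "graph_map_cube m V R x"
  shows "graph_map_cube j V R (restr j (x \<circ> \<phi>))"
  using assms(2) box_mor_length[OF assms(1)] box_mor_cube_adj[OF assms(1)]
  unfolding graph_map_cube_def restr_def by auto

lemma graph_map_cube_induced_iff:
  "T \<subseteq> S \<Longrightarrow> graph_map_cube m T (induced E T) x
    \<longleftrightarrow> graph_map_cube m S (induced E S) x \<and> (\<forall>ws. length ws = m \<longrightarrow> x ws \<in> T)"
  unfolding graph_map_cube_def induced_def by auto

lemma cells_sk_N1:
  "cells (sk n (N1 V R)) j =
    {restr j (x \<circ> \<phi>) | m \<phi> x. m \<le> n \<and> (j, m, \<phi>) \<in> box_mor \<and> graph_map_cube m V R x}"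
  by (simp add: sk_def N1_def)

lemma act_sk_N1: "act (sk n (N1 V R)) = (\<lambda>(j, k, \<phi>) x. restr j (x \<circ> \<phi>))"
  by (simp add: sk_def N1_def)

lemma cells_sk_N1_graph_map_cube: "y \<in> cells (sk n (N1 V R)) j \<Longrightarrow> graph_map_cube j V R y"
  unfolding cells_sk_N1 using graph_map_cube_comp by blast

lemma cells_sk_N1_mono:
  "S \<subseteq> T \<Longrightarrow> cells (sk n (N1 S (induced E S))) k \<subseteq> cells (sk n (N1 T (induced E T))) k"
  unfolding cells_sk_N1 using graph_map_cube_induced_iff by blast

lemma restr_comp_box_mor:
  "(j, k, \<phi>) \<in> box_mor \<Longrightarrow> restr j (restr k (x \<circ> \<psi>) \<circ> \<phi>) = restr j (x \<circ> restr j (\<psi> \<circ> \<phi>))"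
  by (rule ext) (simp add: restr_def box_mor_length)

lemma is_cset_sk_N1: "is_cset (sk n (N1 V R))"
  unfolding is_cset_def
proof (intro conjI allI impI)
  fix j k \<phi> y assume \<phi>: "(j, k, \<phi>) \<in> box_mor" and "y \<in> cells (sk n (N1 V R)) k"
  then obtain m \<psi> x where y: "y = restr k (x \<circ> \<psi>)" and "m \<le> n" and \<psi>: "(k, m, \<psi>) \<in> box_mor"
    and "graph_map_cube m V R x"
    unfolding cells_sk_N1 by blast
  moreover have "act (sk n (N1 V R)) (j, k, \<phi>) y = restr j (x \<circ> restr j (\<psi> \<circ> \<phi>))"
    by (simp add: act_sk_N1 y restr_comp_box_mor[OF \<phi>])
  ultimately show "act (sk n (N1 V R)) (j, k, \<phi>) y \<in> cells (sk n (N1 V R)) j"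
    unfolding cells_sk_N1 using bm_comp[OF \<phi> \<psi>] by blast
next
  fix k y assume "y \<in> cells (sk n (N1 V R)) k"
  then show "act (sk n (N1 V R)) (k, k, restr k id) y = y"
    by (auto dest!: cells_sk_N1_graph_map_cube simp: act_sk_N1 restr_def graph_map_cube_def)
next
  fix j k m \<phi> \<psi> y assume "(j, k, \<phi>) \<in> box_mor"
  then show "act (sk n (N1 V R)) (j, m, restr j (\<psi> \<circ> \<phi>)) y =
      act (sk n (N1 V R)) (j, k, \<phi>) (act (sk n (N1 V R)) (k, m, \<psi>) y)"
    by (simp add: act_sk_N1 restr_def box_mor_length fun_eq_iff)
qed

lemma cells_sk_N1_induced_subset:
  assumes "T \<subseteq> S" and y: "y \<in> cells (sk n (N1 S (induced E S))) k"
    and yT: "\<And>zs. length zs = k \<Longrightarrow> y zs \<in> T"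
  shows "y \<in> cells (sk n (N1 T (induced E T))) k"
proof -
  from y obtain m \<phi> x where y_eq: "y = restr k (x \<circ> \<phi>)" and "m \<le> n"
    and \<phi>: "(k, m, \<phi>) \<in> box_mor" and x: "graph_map_cube m S (induced E S) x"
    unfolding cells_sk_N1 by blast
  obtain r where r: "(m, m, r) \<in> box_mor"
    and r_image: "\<And>ws. length ws = m \<Longrightarrow> r ws \<in> \<phi> ` {zs. length zs = k}"
    and r_fix: "\<And>zs. length zs = k \<Longrightarrow> r (\<phi> zs) = \<phi> zs"
    using box_mor_image_retract[OF \<phi>] by blast
  define z where "z = restr m (x \<circ> r)"
  have "z ws \<in> T" if ws: "length ws = m" for ws
  proof -
    obtain zs where "length zs = k" "r ws = \<phi> zs"
      using r_image[OF ws] by blast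
    then show ?thesis
      using ws yT by (simp add: z_def y_eq restr_def)
  qed
  then have "graph_map_cube m T (induced E T) z"
    using graph_map_cube_comp[OF r x] graph_map_cube_induced_iff[OF assms(1)] by (simp add: z_def)
  moreover have "y = restr k (z \<circ> \<phi>)"
    using r_fix box_mor_length[OF \<phi>] by (auto simp: y_eq z_def restr_def)
  ultimately show ?thesis
    unfolding cells_sk_N1 using \<open>m \<le> n\<close> \<phi> by blast
qed

lemma cells_sk_N1_Int:
  "cells (sk n (N1 (A \<inter> B) (induced E (A \<inter> B)))) k =
    cells (sk n (N1 A (induced E A))) k \<inter> cells (sk n (N1 B (induced E B))) k"
proof (intro equalityI subsetI)
  fix y assume "y \<in> cells (sk n (N1 A (induced E A))) k \<inter> cells (sk n (N1 B (induced E B))) k"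
  then have yA: "y \<in> cells (sk n (N1 A (induced E A))) k"
    and "graph_map_cube k A (induced E A) y" "graph_map_cube k B (induced E B) y"
    by (auto dest: cells_sk_N1_graph_map_cube)
  then show "y \<in> cells (sk n (N1 (A \<inter> B) (induced E (A \<inter> B)))) k"
    by (intro cells_sk_N1_induced_subset[OF _ yA]) (auto simp: graph_map_cube_def)
next
  fix y assume "y \<in> cells (sk n (N1 (A \<inter> B) (induced E (A \<inter> B)))) k"
  then show "y \<in> cells (sk n (N1 A (induced E A))) k \<inter> cells (sk n (N1 B (induced E B))) k"
    using cells_sk_N1_mono[of "A \<inter> B" A n E k] cells_sk_N1_mono[of "A \<inter> B" B n E k] by blast
qed

lemma cube_path:
  assumes "length ws = m" and "length ws' = m"
  obtains p where "length p = Suc m" "hd p = ws" "last p = ws'" "\<forall>q\<in>set p. length q = m"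
    "\<And>i. Suc i < length p \<Longrightarrow> cube_adj (p!i) (p!Suc i)"
proof
  let ?p = "map (\<lambda>i. take i ws' @ drop i ws) [0..<Suc m]"
  have p_nth: "?p ! i = take i ws' @ drop i ws" if "i < Suc m" for i
    using that by (simp del: upt_Suc)
  show "length ?p = Suc m" "\<forall>q\<in>set ?p. length q = m"
    using assms by auto
  show "hd ?p = ws" "last ?p = ws'"
    using assms p_nth[of 0] p_nth[of m] by (simp_all add: hd_conv_nth last_conv_nth del: upt_Suc)
  fix i assume "Suc i < length ?p"
  then have "i < m"
    by simp
  have mix: "(take j ws' @ drop j ws) ! q = (if q < j then ws'!q else ws!q)" if "j \<le> m" "q < m" for j q
    using that assms by (auto simp: nth_append min_def)
  have "?p!i = take i ws' @ drop i ws"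
    by (rule p_nth) (use \<open>i < m\<close> in simp)
  moreover have "?p!Suc i = take (Suc i) ws' @ drop (Suc i) ws"
    by (rule p_nth) (use \<open>i < m\<close> in simp)
  moreover have "\<forall>q<length (take i ws' @ drop i ws). q \<noteq> i
      \<longrightarrow> (take i ws' @ drop i ws)!q = (take (Suc i) ws' @ drop (Suc i) ws)!q"
    using \<open>i < m\<close> assms by (auto simp: mix)
  moreover have "length (take i ws' @ drop i ws) = length (take (Suc i) ws' @ drop (Suc i) ws)"
    using assms by simp
  ultimately show "cube_adj (?p!i) (?p!Suc i)"
    unfolding cube_adj_iff by metis
qed

lemma graph_map_cube_gdist_le:
  assumes x: "graph_map_cube m V (induced E V) x" and "length ws = m" "length ws' = m"
  shows "gdist V E (x ws) (x ws') \<le> enat m"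
proof -
  obtain p where p: "length p = Suc m" "hd p = ws" "last p = ws'" "\<forall>q\<in>set p. length q = m"
    "\<And>i. Suc i < length p \<Longrightarrow> cube_adj (p!i) (p!Suc i)"
    using cube_path assms(2,3) by blast
  have "is_path V E (map x p)"
    unfolding is_path_def
  proof (intro conjI allI impI)
    show "map x p \<noteq> []" "set (map x p) \<subseteq> V"
      using p(1,4) x by (auto simp: graph_map_cube_def)
    fix i assume "Suc i < length (map x p)"
    then show "E (map x p ! i) (map x p ! Suc i)"
      using p(4,5) x by (auto simp: graph_map_cube_def induced_def)
  qed
  moreover have "p \<noteq> []"
    using p(1) by auto
  then have "hd (map x p) = x ws" "last (map x p) = x ws'"
    using p(2,3) by (simp_all add: hd_map last_map)
  ultimately have "gdist V E (x ws) (x ws') \<le> enat (length (map x p) - 1)"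
    unfolding gdist_def by (intro INF_lower) simp
  then show ?thesis
    using p(1) by simp
qed

lemma cells_sk_N1_Un:
  assumes "A \<union> B = V"
    and far: "\<forall>v\<in>V. \<forall>w\<in>V. v \<notin> A \<longrightarrow> w \<notin> B \<longrightarrow> enat (n + 1) \<le> gdist V E v w"
  shows "cells (sk n (N1 V (induced E V))) k =
    cells (sk n (N1 A (induced E A))) k \<union> cells (sk n (N1 B (induced E B))) k"
proof (intro equalityI subsetI)
  fix y assume "y \<in> cells (sk n (N1 V (induced E V))) k"
  then obtain m \<phi> x where y: "y = restr k (x \<circ> \<phi>)" and "m \<le> n" and \<phi>: "(k, m, \<phi>) \<in> box_mor"
    and x: "graph_map_cube m V (induced E V) x"
    unfolding cells_sk_N1 by blast
  have "(\<forall>ws. length ws = m \<longrightarrow> x ws \<in> A) \<or> (\<forall>ws. length ws = m \<longrightarrow> x ws \<in> B)"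
  proof (rule ccontr)
    assume "\<not> ?thesis"
    then obtain ws ws' where "length ws = m" "x ws \<notin> A" "length ws' = m" "x ws' \<notin> B"
      by blast
    moreover from this have "x ws \<in> V" "x ws' \<in> V"
      using x by (auto simp: graph_map_cube_def)
    ultimately have "enat (n + 1) \<le> enat m"
      using far graph_map_cube_gdist_le[OF x] order_trans by blast
    then show False
      using \<open>m \<le> n\<close> by simp
  qed
  then have "graph_map_cube m A (induced E A) x \<or> graph_map_cube m B (induced E B) x"
    using x assms(1) graph_map_cube_induced_iff[of A V] graph_map_cube_induced_iff[of B V] by blast
  then show "y \<in> cells (sk n (N1 A (induced E A))) k \<union> cells (sk n (N1 B (induced E B))) k"
    unfolding cells_sk_N1 using y \<open>m \<le> n\<close> \<phi> by blast
next
  fix y assume "y \<in> cells (sk n (N1 A (induced E A))) k \<union> cells (sk n (N1 B (induced E B))) k"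
  then show "y \<in> cells (sk n (N1 V (induced E V))) k"
    using assms(1) cells_sk_N1_mono[of A V n E k] cells_sk_N1_mono[of B V n E k] by blast
qed

lemma cset_map_inclusion:
  "(\<And>k. cells X k \<subseteq> cells Y k) \<Longrightarrow> act X = act Y \<Longrightarrow> cset_map X Y incl_map"
  unfolding cset_map_def incl_map_def by auto

lemma cset_map_glue:
  assumes "is_cset A" "is_cset B" and act_eq: "act A = act Q" "act B = act Q"
    and cells_Q: "\<And>k. cells Q k = cells A k \<union> cells B k"
    and g1: "cset_map A Y g1" and g2: "cset_map B Y g2"
    and agree: "\<And>k x. x \<in> cells A k \<Longrightarrow> x \<in> cells B k \<Longrightarrow> g1 k x = g2 k x"
  shows "cset_map Q Y (\<lambda>k x. if x \<in> cells A k then g1 k x else g2 k x)" (is "cset_map Q Y ?h")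
  unfolding cset_map_def
proof (intro conjI allI impI)
  fix k x assume "x \<in> cells Q k"
  then show "?h k x \<in> cells Y k"
    using g1 g2 cells_Q by (auto simp: cset_map_def)
next
  fix j k \<phi> x assume \<phi>: "(j, k, \<phi>) \<in> box_mor" and "x \<in> cells Q k"
  show "?h j (act Q (j, k, \<phi>) x) = act Y (j, k, \<phi>) (?h k x)"
  proof (cases "x \<in> cells A k")
    case True
    then have "act A (j, k, \<phi>) x \<in> cells A j"
      using \<open>is_cset A\<close> \<phi> by (simp add: is_cset_def)
    then show ?thesis
      using True g1 \<phi> act_eq by (simp add: cset_map_def)
  next
    case False
    then have xB: "x \<in> cells B k"
      using \<open>x \<in> cells Q k\<close> cells_Q by blast
    then have "act B (j, k, \<phi>) x \<in> cells B j"
      using \<open>is_cset B\<close> \<phi> by (simp add: is_cset_def)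
    moreover have "g2 j (act B (j, k, \<phi>) x) = act Y (j, k, \<phi>) (g2 k x)"
      using g2 \<phi> xB by (simp add: cset_map_def)
    ultimately show ?thesis
      using False agree act_eq by auto
  qed
qed

lemma cset_pushout_Un_Int:
  fixes T :: "'y itself"
  assumes "is_cset P" "is_cset A" "is_cset B" "is_cset Q"
    and act_eq: "act P = act Q" "act A = act Q" "act B = act Q"
    and cells_P: "\<And>k. cells P k = cells A k \<inter> cells B k"
    and cells_Q: "\<And>k. cells Q k = cells A k \<union> cells B k"
  shows "cset_pushout T P A B Q incl_map incl_map incl_map incl_map"
  unfolding cset_pushout_def
proof (intro conjI allI impI)
  show "is_cset P" "is_cset A" "is_cset B" "is_cset Q"
    by fact+
  show "cset_map P A incl_map" "cset_map P B incl_map" "cset_map A Q incl_map" "cset_map B Q incl_map"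
    using cells_P cells_Q act_eq by (auto intro!: cset_map_inclusion)
  show "incl_map k (incl_map k x) = incl_map k (incl_map k x)" for k x
    by (rule refl)
next
  fix Y :: "'y cset" and g1 g2
  assume "is_cset Y" and "cset_map A Y g1" "cset_map B Y g2"
    and agree: "\<forall>k x. x \<in> cells P k \<longrightarrow> g1 k (incl_map k x) = g2 k (incl_map k x)"
  then have "cset_map Q Y (\<lambda>k x. if x \<in> cells A k then g1 k x else g2 k x)"
    using assms cells_P by (intro cset_map_glue) (auto simp: incl_map_def)
  then show "\<exists>h. cset_map Q Y h \<and> (\<forall>k x. x \<in> cells A k \<longrightarrow> h k (incl_map k x) = g1 k x)
      \<and> (\<forall>k x. x \<in> cells B k \<longrightarrow> h k (incl_map k x) = g2 k x)"
    using agree cells_P by (intro exI) (auto simp: incl_map_def)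
next
  fix Y :: "'y cset" and g1 g2 h h' k x
  assume "\<forall>k x. x \<in> cells A k \<longrightarrow> h k (incl_map k x) = g1 k x"
    "\<forall>k x. x \<in> cells B k \<longrightarrow> h k (incl_map k x) = g2 k x"
    "\<forall>k x. x \<in> cells A k \<longrightarrow> h' k (incl_map k x) = g1 k x"
    "\<forall>k x. x \<in> cells B k \<longrightarrow> h' k (incl_map k x) = g2 k x"
    "x \<in> cells Q k"
  then show "h k x = h' k x"
    using cells_Q by (auto simp: incl_map_def)
qed

theorem corollary2p8:
  fixes V :: "'v set" and E :: "'v \<Rightarrow> 'v \<Rightarrow> bool" and A B :: "'v set" and n :: nat
  assumes "graph V E"
    and "A \<subseteq> V" and "B \<subseteq> V" and "A \<union> B = V"
    and "\<forall>v\<in>V. \<forall>w\<in>V. v \<notin> A \<longrightarrow> w \<notin> B \<longrightarrow> enat (n + 1) \<le> gdist V E v w"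
  shows "skeletal_pushout_incl TYPE('y) n E (A \<inter> B) A B V"
  \<comment> \<open>The nerves only see the induced relations.\<close>
  unfolding skeletal_pushout_incl_def
proof (rule cset_pushout_Un_Int)
  show "is_cset (sk n (N1 (A \<inter> B) (induced E (A \<inter> B))))" "is_cset (sk n (N1 A (induced E A)))"
    "is_cset (sk n (N1 B (induced E B)))" "is_cset (sk n (N1 V (induced E V)))"
    by (rule is_cset_sk_N1)+
  show "act (sk n (N1 (A \<inter> B) (induced E (A \<inter> B)))) = act (sk n (N1 V (induced E V)))"
    "act (sk n (N1 A (induced E A))) = act (sk n (N1 V (induced E V)))"
    "act (sk n (N1 B (induced E B))) = act (sk n (N1 V (induced E V)))"
    by (simp_all add: act_sk_N1)
  show "cells (sk n (N1 (A \<inter> B) (induced E (A \<inter> B)))) k =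
      cells (sk n (N1 A (induced E A))) k \<inter> cells (sk n (N1 B (induced E B))) k" for k
    by (rule cells_sk_N1_Int)
  show "cells (sk n (N1 V (induced E V))) k =
      cells (sk n (N1 A (induced E A))) k \<union> cells (sk n (N1 B (induced E B))) k" for k
    using assms(4,5) by (rule cells_sk_N1_Un)
qed

end
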